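(* Let $B$ be a homology $d$-ball with vertex set $V$, and let $\sigma$ be an interior $(d-1)$-face of $B$ with $\partial\overline{\sigma}\subseteq\partial B$. Then the induced subcomplex $B[V\setminus\sigma]$ has exactly two connected components.
   Context: Fix a field $\mathbb{F}$; all homology is with coefficients in $\mathbb{F}$. For a simplicial complex $\Delta$ on vertex set $V$ and $W\subseteq V$, $\Delta[W]=\{\alpha\in\Delta:\alpha\subseteq W\}$. For a face $\sigma$, $\overline{\sigma}$ is the complex of all subsets of $\sigma$ and $\partial\overline\sigma$ the complex of its proper subsets. For a face $\sigma$ of $\Delta$, ${\rm lk}_\Delta(\sigma)=\{\tau\setminus\sigma:\sigma\subseteq\tau\in\Delta\}$. A $d$-dimensional simplicial complex $S$ is a homology $d$-sphere if for every face $\sigma$ of dimension $i\ge -1$, ${\rm lk}_S(\sigma)$ has the same $\mathbb{F}$-homology as the $(d-i-1)$-sphere. A $d$-dimensional simplicial complex $B$ is a homology $d$-ball if (i) $B$ has trivial reduced homology, (ii) for each face $\sigma$ of dimension $i\le d-1$ the reduced homology of ${\rm lk}_B(\sigma)$ is either trivial or that of the $(d-i-1)$-sphere, and (iii) the boundary $\partial B=\{\sigma\in B: -1<\dim\sigma<d,\ \widetilde H_{d-\dim\sigma-1}({\rm lk}_B(\sigma))=0\}\cup\{\emptyset\}$ is a homology $(d-1)$-sphere. An interior face of $B$ is a face not in $\partial B$. *)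

theory Defs
  imports Main
begin

text \<open>Vertices are linearly ordered,
  which fixes the orientation of simplices.\<close>

definition simplicial_complex :: "'v set set \<Rightarrow> bool" where
  "simplicial_complex \<Delta> \<longleftrightarrow> finite \<Delta> \<and> {} \<in> \<Delta> \<and> (\<forall>\<sigma>\<in>\<Delta>. finite \<sigma>)
     \<and> (\<forall>\<sigma>\<in>\<Delta>. \<forall>\<tau>. \<tau> \<subseteq> \<sigma> \<longrightarrow> \<tau> \<in> \<Delta>)"

definition vertices :: "'v set set \<Rightarrow> 'v set" where
  "vertices \<Delta> = {v. {v} \<in> \<Delta>}"

definition induced :: "'v set set \<Rightarrow> 'v set \<Rightarrow> 'v set set" where
  "induced \<Delta> W = {\<alpha> \<in> \<Delta>. \<alpha> \<subseteq> W}"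

definition link :: "'v set set \<Rightarrow> 'v set \<Rightarrow> 'v set set" where
  "link \<Delta> \<sigma> = {\<tau> - \<sigma> | \<tau>. \<tau> \<in> \<Delta> \<and> \<sigma> \<subseteq> \<tau>}"

definition fdim :: "'v set \<Rightarrow> int" where
  "fdim \<sigma> = int (card \<sigma>) - 1"

definition has_dim :: "'v set set \<Rightarrow> int \<Rightarrow> bool" where
  "has_dim \<Delta> d \<longleftrightarrow> (\<exists>\<sigma>\<in>\<Delta>. fdim \<sigma> = d) \<and> (\<forall>\<sigma>\<in>\<Delta>. fdim \<sigma> \<le> d)"

definition faces_of_dim :: "'v set set \<Rightarrow> int \<Rightarrow> 'v set set" where
  "faces_of_dim \<Delta> k = {\<sigma>\<in>\<Delta>. fdim \<sigma> = k}"

definition chains :: "'a itself \<Rightarrow> 'v set set \<Rightarrow> int \<Rightarrow> ('v set \<Rightarrow> 'a::field) set" where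
  "chains _ \<Delta> k = {f. \<forall>\<sigma>. \<sigma> \<notin> faces_of_dim \<Delta> k \<longrightarrow> f \<sigma> = 0}"

text \<open>Incidence sign of a codimension-one face \<tau> of \<sigma>: (-1)^(position of the
  removed vertex in the ordered simplex \<sigma>).\<close>

definition incidence :: "'v::linorder set \<Rightarrow> 'v set \<Rightarrow> 'a::field" where
  "incidence \<sigma> \<tau> = (- 1) ^ card {x \<in> \<tau>. x < (THE v. v \<in> \<sigma> - \<tau>)}"

definition boundary_map ::
  "'v::linorder set set \<Rightarrow> int \<Rightarrow> ('v set \<Rightarrow> 'a::field) \<Rightarrow> ('v set \<Rightarrow> 'a)" where
  "boundary_map \<Delta> k f = (\<lambda>\<tau>. if \<tau> \<in> faces_of_dim \<Delta> (k - 1)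
      then (\<Sum>\<sigma>\<in>{\<sigma>\<in>faces_of_dim \<Delta> k. \<tau> \<subseteq> \<sigma>}. incidence \<sigma> \<tau> * f \<sigma>) else 0)"

definition cycles :: "'a itself \<Rightarrow> 'v::linorder set set \<Rightarrow> int \<Rightarrow> ('v set \<Rightarrow> 'a::field) set" where
  "cycles A \<Delta> k = {f \<in> chains A \<Delta> k. boundary_map \<Delta> k f = (\<lambda>_. 0)}"

definition boundaries :: "'a itself \<Rightarrow> 'v::linorder set set \<Rightarrow> int \<Rightarrow> ('v set \<Rightarrow> 'a::field) set" where
  "boundaries A \<Delta> k = boundary_map \<Delta> (k + 1) ` chains A \<Delta> (k + 1)"

text \<open>Reduced homology is computed from the augmented chain complex, in which the
  empty face is the unique face of dimension -1.\<close>

definition red_hom_trivial :: "'a::field itself \<Rightarrow> 'v::linorder set set \<Rightarrow> int \<Rightarrow> bool" where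
  "red_hom_trivial A \<Delta> k \<longleftrightarrow> cycles A \<Delta> k = boundaries A \<Delta> k"

definition red_hom_is_field :: "'a::field itself \<Rightarrow> 'v::linorder set set \<Rightarrow> int \<Rightarrow> bool" where
  "red_hom_is_field A \<Delta> k \<longleftrightarrow> (\<exists>z\<in>cycles A \<Delta> k. z \<notin> boundaries A \<Delta> k \<and>
     cycles A \<Delta> k = {(\<lambda>x. c * z x + b x) | c b. b \<in> boundaries A \<Delta> k})"

definition acyclic_cx :: "'a::field itself \<Rightarrow> 'v::linorder set set \<Rightarrow> bool" where
  "acyclic_cx A \<Delta> \<longleftrightarrow> (\<forall>k. red_hom_trivial A \<Delta> k)"

definition sphere_homology :: "'a::field itself \<Rightarrow> 'v::linorder set set \<Rightarrow> int \<Rightarrow> bool" where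
  "sphere_homology A \<Delta> m \<longleftrightarrow> red_hom_is_field A \<Delta> m \<and> (\<forall>k. k \<noteq> m \<longrightarrow> red_hom_trivial A \<Delta> k)"

definition homology_sphere :: "'a::field itself \<Rightarrow> 'v::linorder set set \<Rightarrow> int \<Rightarrow> bool" where
  "homology_sphere A S d \<longleftrightarrow> simplicial_complex S \<and> has_dim S d \<and>
     (\<forall>\<sigma>\<in>S. sphere_homology A (link S \<sigma>) (d - fdim \<sigma> - 1))"

definition ball_boundary :: "'a::field itself \<Rightarrow> 'v::linorder set set \<Rightarrow> int \<Rightarrow> 'v set set" where
  "ball_boundary A B d = {\<sigma>\<in>B. -1 < fdim \<sigma> \<and> fdim \<sigma> < d \<and>
      red_hom_trivial A (link B \<sigma>) (d - fdim \<sigma> - 1)} \<union> {{}}"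

definition homology_ball :: "'a::field itself \<Rightarrow> 'v::linorder set set \<Rightarrow> int \<Rightarrow> bool" where
  "homology_ball A B d \<longleftrightarrow> simplicial_complex B \<and> has_dim B d \<and>
     acyclic_cx A B \<and>
     (\<forall>\<sigma>\<in>B. fdim \<sigma> \<le> d - 1 \<longrightarrow>
        acyclic_cx A (link B \<sigma>) \<or> sphere_homology A (link B \<sigma>) (d - fdim \<sigma> - 1)) \<and>
     homology_sphere A (ball_boundary A B d) (d - 1)"

definition connected_rel :: "'v set set \<Rightarrow> ('v \<times> 'v) set" where
  "connected_rel \<Delta> = {(u, v). u \<in> vertices \<Delta> \<and> v \<in> vertices \<Delta> \<and>
      (\<lambda>x y. {x, y} \<in> \<Delta>)\<^sup>*\<^sup>* u v}"

definition num_components :: "'v set set \<Rightarrow> nat" where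
  "num_components \<Delta> = card (vertices \<Delta> // connected_rel \<Delta>)"

end

theory Submission
  imports Defs
begin

text \<open>The link of the interior ridge \<open>\<sigma>\<close> is a homology 0-sphere, i.e. two vertices \<open>a\<close> and \<open>b\<close>,
  while every proper face \<open>\<rho>\<close> of \<open>\<sigma>\<close> lies on \<open>\<partial>B\<close> (or is empty), so its link is acyclic.
  By Mayer--Vietoris for \<open>K = (K - y) \<union> star y\<close>, if \<open>H\<^sub>1(K) = 0\<close> then \<open>H\<^sub>1(lk y) = 0\<close> forces
  \<open>H\<^sub>1(K - y) = 0\<close>, and two neighbours of \<open>y\<close> joined in \<open>K - y\<close> are joined in \<open>lk y\<close>.
  Deleting the vertices of \<open>\<sigma> - \<rho>\<close> from \<open>lk \<rho>\<close> one at a time therefore keeps \<open>H\<^sub>1\<close> zero, and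
  a path from \<open>a\<close> to \<open>b\<close> in \<open>B[V - \<sigma>] = lk \<emptyset> - \<sigma>\<close> would descend to a path in the edgeless
  complex \<open>lk \<sigma>\<close>. Conversely, as the links \<open>lk \<rho>\<close> with \<open>\<rho> \<subset> \<sigma>\<close> are connected, induction on
  \<open>|\<sigma> - \<rho>|\<close> joins every vertex outside \<open>\<sigma>\<close> to \<open>a\<close> or \<open>b\<close>.\<close>

text \<open>Unlike \<^const>\<open>simplicial_complex\<close>, the empty family is allowed: the link of a
  non-face is empty.\<close>

definition down_closed :: "'v set set \<Rightarrow> bool" where
  "down_closed \<Delta> \<longleftrightarrow> finite \<Delta> \<and> (\<forall>s\<in>\<Delta>. finite s) \<and> (\<forall>s\<in>\<Delta>. \<forall>t. t \<subseteq> s \<longrightarrow> t \<in> \<Delta>)"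

abbreviation adjacent :: "'v set set \<Rightarrow> 'v \<Rightarrow> 'v \<Rightarrow> bool" where
  "adjacent \<Delta> x y \<equiv> {x, y} \<in> \<Delta>"

lemma simplicial_complex_down_closed: "simplicial_complex \<Delta> \<Longrightarrow> down_closed \<Delta>"
  by (auto simp: simplicial_complex_def down_closed_def)

lemma down_closed_finite: "down_closed \<Delta> \<Longrightarrow> finite \<Delta>"
  by (simp add: down_closed_def)

lemma down_closed_finite_face: "down_closed \<Delta> \<Longrightarrow> s \<in> \<Delta> \<Longrightarrow> finite s"
  by (simp add: down_closed_def)

lemma down_closed_subset_face: "down_closed \<Delta> \<Longrightarrow> s \<in> \<Delta> \<Longrightarrow> t \<subseteq> s \<Longrightarrow> t \<in> \<Delta>"
  by (auto simp: down_closed_def)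

lemma finite_faces_of_dim: "down_closed \<Delta> \<Longrightarrow> finite (faces_of_dim \<Delta> k)"
  by (simp add: faces_of_dim_def down_closed_def)

lemma link_eq: "link \<Delta> \<rho> = {\<tau>. \<tau> \<inter> \<rho> = {} \<and> \<tau> \<union> \<rho> \<in> \<Delta>}"
proof (intro equalityI subsetI)
  fix \<tau> assume "\<tau> \<in> link \<Delta> \<rho>"
  then show "\<tau> \<in> {\<tau>. \<tau> \<inter> \<rho> = {} \<and> \<tau> \<union> \<rho> \<in> \<Delta>}"
    by (auto simp: link_def Un_absorb2)
next
  fix \<tau> assume "\<tau> \<in> {\<tau>. \<tau> \<inter> \<rho> = {} \<and> \<tau> \<union> \<rho> \<in> \<Delta>}"
  then have "\<tau> = (\<tau> \<union> \<rho>) - \<rho>" "\<tau> \<union> \<rho> \<in> \<Delta>" by auto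
  then show "\<tau> \<in> link \<Delta> \<rho>" unfolding link_def by blast
qed

lemma link_singleton: "link \<Delta> {y} = {s. y \<notin> s \<and> insert y s \<in> \<Delta>}"
  by (auto simp: link_eq)

lemma link_empty [simp]: "link \<Delta> {} = \<Delta>"
  by (simp add: link_eq)

lemma link_link: "y \<notin> \<rho> \<Longrightarrow> link (link \<Delta> \<rho>) {y} = link \<Delta> (insert y \<rho>)"
  by (auto simp: link_eq)

lemma link_antimono: "down_closed \<Delta> \<Longrightarrow> \<rho> \<subseteq> \<rho>' \<Longrightarrow> link \<Delta> \<rho>' \<subseteq> link \<Delta> \<rho>"
  by (auto simp: link_eq intro: down_closed_subset_face)

lemma link_subset_induced_delete: "down_closed \<Delta> \<Longrightarrow> link \<Delta> {y} \<subseteq> induced \<Delta> (- {y})"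
  by (auto simp: link_singleton induced_def intro: down_closed_subset_face)

lemma induced_subset: "induced \<Delta> W \<subseteq> \<Delta>"
  by (simp add: induced_def)

lemma induced_UNIV [simp]: "induced \<Delta> UNIV = \<Delta>"
  by (simp add: induced_def)

lemma induced_induced: "induced (induced \<Delta> V) W = induced \<Delta> (V \<inter> W)"
  by (auto simp: induced_def)

lemma link_induced: "y \<in> W \<Longrightarrow> link (induced \<Delta> W) {y} = induced (link \<Delta> {y}) W"
  by (auto simp: link_singleton induced_def)

lemma induced_vertices_diff:
  assumes "simplicial_complex \<Delta>"
  shows "induced \<Delta> (vertices \<Delta> - \<sigma>) = induced \<Delta> (- \<sigma>)"
proof -
  have "\<alpha> \<subseteq> vertices \<Delta>" if "\<alpha> \<in> \<Delta>" for \<alpha>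
    using assms that by (auto simp: simplicial_complex_def vertices_def)
  then show ?thesis by (auto simp: induced_def)
qed

lemma down_closed_induced: "down_closed \<Delta> \<Longrightarrow> down_closed (induced \<Delta> W)"
  by (auto simp: down_closed_def induced_def)

lemma down_closed_link:
  assumes "down_closed \<Delta>"
  shows "down_closed (link \<Delta> \<rho>)"
proof -
  have "link \<Delta> \<rho> = (\<lambda>\<tau>. \<tau> - \<rho>) ` {\<tau> \<in> \<Delta>. \<rho> \<subseteq> \<tau>}"
    by (auto simp: link_def)
  then have "finite (link \<Delta> \<rho>)"
    using down_closed_finite[OF assms] by simp
  moreover have "t \<in> link \<Delta> \<rho>" if "s \<in> link \<Delta> \<rho>" "t \<subseteq> s" for s t
    using that down_closed_subset_face[OF assms, of "s \<union> \<rho>" "t \<union> \<rho>"] by (auto simp: link_eq)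
  moreover have "finite s" if "s \<in> link \<Delta> \<rho>" for s
    using that down_closed_finite_face[OF assms] by (auto simp: link_eq)
  ultimately show ?thesis by (auto simp: down_closed_def)
qed

lemma chains_mono: "\<Delta>' \<subseteq> \<Delta> \<Longrightarrow> chains A \<Delta>' k \<subseteq> chains A \<Delta> k"
  by (auto simp: chains_def faces_of_dim_def)

lemma boundary_map_add:
  "boundary_map \<Delta> k (\<lambda>x. f x + g x) = (\<lambda>x. boundary_map \<Delta> k f x + boundary_map \<Delta> k g x)"
  unfolding boundary_map_def by (auto simp: distrib_left sum.distrib)

lemma boundary_map_diff:
  "boundary_map \<Delta> k (\<lambda>x. f x - g x) = (\<lambda>x. boundary_map \<Delta> k f x - boundary_map \<Delta> k g x)"
  unfolding boundary_map_def by (auto simp: right_diff_distrib sum_subtractf)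

lemma boundary_map_zero: "boundary_map \<Delta> k (\<lambda>_. 0) = (\<lambda>_. 0)"
  unfolding boundary_map_def by auto

lemma boundary_map_in_chains: "boundary_map \<Delta> (k + 1) f \<in> chains A \<Delta> k"
  by (simp add: boundary_map_def chains_def)

lemma boundary_map_subcomplex:
  assumes fin: "finite \<Delta>" and sub: "\<Delta>' \<subseteq> \<Delta>" and closed: "down_closed \<Delta>'"
    and f: "f \<in> chains A \<Delta>' k"
  shows "boundary_map \<Delta> k f = boundary_map \<Delta>' k f"
proof
  fix \<tau>
  have fin_cofaces: "finite {\<sigma> \<in> faces_of_dim \<Delta> k. \<tau> \<subseteq> \<sigma>}"
    using fin by (simp add: faces_of_dim_def)
  have f0: "f \<sigma> = 0" if "\<sigma> \<notin> faces_of_dim \<Delta>' k" for \<sigma>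
    using f that by (simp add: chains_def)
  show "boundary_map \<Delta> k f \<tau> = boundary_map \<Delta>' k f \<tau>"
  proof (cases "\<tau> \<in> faces_of_dim \<Delta>' (k - 1)")
    case True
    then have "\<tau> \<in> faces_of_dim \<Delta> (k - 1)"
      using sub by (auto simp: faces_of_dim_def)
    moreover have "(\<Sum>\<sigma>\<in>{\<sigma> \<in> faces_of_dim \<Delta> k. \<tau> \<subseteq> \<sigma>}. incidence \<sigma> \<tau> * f \<sigma>)
        = (\<Sum>\<sigma>\<in>{\<sigma> \<in> faces_of_dim \<Delta>' k. \<tau> \<subseteq> \<sigma>}. incidence \<sigma> \<tau> * f \<sigma>)"
      by (rule sum.mono_neutral_right[OF fin_cofaces]) (use sub f0 in \<open>auto simp: faces_of_dim_def\<close>)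
    ultimately show ?thesis
      using True by (simp add: boundary_map_def)
  next
    case False
    have "f \<sigma> = 0" if "\<sigma> \<in> faces_of_dim \<Delta> k" "\<tau> \<subseteq> \<sigma>" "\<tau> \<in> faces_of_dim \<Delta> (k - 1)" for \<sigma>
    proof (rule f0)
      show "\<sigma> \<notin> faces_of_dim \<Delta>' k"
        using that False down_closed_subset_face[OF closed, of \<sigma> \<tau>] by (auto simp: faces_of_dim_def)
    qed
    then show ?thesis
      using False by (auto simp: boundary_map_def intro!: sum.neutral)
  qed
qed

lemma incidence_insert:
  assumes "q \<notin> \<tau>"
  shows "incidence (insert q \<tau>) \<tau> = (- 1) ^ card {x \<in> \<tau>. x < q}"
proof -
  have "insert q \<tau> - \<tau> = {q}" using assms by auto
  then show ?thesis by (simp add: incidence_def)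
qed

lemma incidence_insert_insert:
  assumes fin: "finite \<tau>" and "q \<notin> \<tau>" "r \<notin> \<tau>" "q \<noteq> r"
  shows "incidence (insert q (insert r \<tau>)) (insert q \<tau>)
    = (- 1) ^ (card {x \<in> \<tau>. x < r} + (if q < r then 1 else 0))"
proof -
  have "insert q (insert r \<tau>) - insert q \<tau> = {r}"
    using assms by auto
  moreover have "card {x \<in> insert q \<tau>. x < r} = card {x \<in> \<tau>. x < r} + (if q < r then 1 else 0)"
  proof (cases "q < r")
    case True
    then have "{x \<in> insert q \<tau>. x < r} = insert q {x \<in> \<tau>. x < r}" by auto
    then show ?thesis using True fin \<open>q \<notin> \<tau>\<close> by simp
  next
    case False
    then have "{x \<in> insert q \<tau>. x < r} = {x \<in> \<tau>. x < r}" by auto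
    then show ?thesis using False by simp
  qed
  ultimately show ?thesis by (simp add: incidence_def)
qed

lemma incidence_insert_insert_cancel:
  assumes fin: "finite \<tau>" and q: "q \<notin> \<tau>" and r: "r \<notin> \<tau>" and qr: "q \<noteq> r"
  shows "incidence (insert q \<tau>) \<tau> * incidence (insert q (insert r \<tau>)) (insert q \<tau>)
       + incidence (insert r \<tau>) \<tau> * incidence (insert q (insert r \<tau>)) (insert r \<tau>) = (0::'a::field)"
proof -
  have swap: "insert q (insert r \<tau>) = insert r (insert q \<tau>)" by auto
  have "incidence (insert q (insert r \<tau>)) (insert r \<tau>)
      = ((- 1) ^ (card {x \<in> \<tau>. x < q} + (if r < q then 1 else 0)) :: 'a)"
    unfolding swap by (rule incidence_insert_insert[OF fin r q qr[symmetric]])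
  then show ?thesis
    unfolding incidence_insert_insert[OF fin q r qr] incidence_insert[OF q] incidence_insert[OF r]
    using qr by (cases "q < r") (auto simp: power_add)
qed

lemma subset_card_add_2_obtains:
  assumes "finite \<sigma>" "\<tau> \<subseteq> \<sigma>" "card \<sigma> = card \<tau> + 2"
  obtains q r where "q \<noteq> r" "q \<notin> \<tau>" "r \<notin> \<tau>" "\<sigma> = insert q (insert r \<tau>)"
proof -
  have "card (\<sigma> - \<tau>) = 2"
    using assms by (simp add: card_Diff_subset finite_subset)
  then obtain q r where "\<sigma> - \<tau> = {q, r}" "q \<noteq> r"
    by (auto simp: card_2_iff)
  then show ?thesis
    using that assms(2) by blast
qed

lemma sum_incidence_incidence_eq_0:
  assumes closed: "down_closed \<Delta>" and \<sigma>: "\<sigma> \<in> faces_of_dim \<Delta> k"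
    and \<tau>: "\<tau> \<in> faces_of_dim \<Delta> (k - 1 - 1)" "\<tau> \<subseteq> \<sigma>"
  shows "(\<Sum>\<rho>\<in>{\<rho> \<in> faces_of_dim \<Delta> (k - 1). \<tau> \<subseteq> \<rho> \<and> \<rho> \<subseteq> \<sigma>}. incidence \<rho> \<tau> * incidence \<sigma> \<rho>)
    = (0::'a::field)"
proof -
  have fin\<sigma>: "finite \<sigma>" and "\<sigma> \<in> \<Delta>"
    using \<sigma> down_closed_finite_face[OF closed] by (auto simp: faces_of_dim_def)
  have fin\<tau>: "finite \<tau>"
    using fin\<sigma> \<tau>(2) finite_subset by blast
  have card\<tau>: "int (card \<tau>) = k - 1"
    using \<tau>(1) by (simp add: faces_of_dim_def fdim_def)
  then have "card \<sigma> = card \<tau> + 2"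
    using \<sigma> by (simp add: faces_of_dim_def fdim_def)
  then obtain q r where qr: "q \<noteq> r" "q \<notin> \<tau>" "r \<notin> \<tau>" and \<sigma>_eq: "\<sigma> = insert q (insert r \<tau>)"
    using subset_card_add_2_obtains[OF fin\<sigma> \<tau>(2)] by blast
  have "{\<rho> \<in> faces_of_dim \<Delta> (k - 1). \<tau> \<subseteq> \<rho> \<and> \<rho> \<subseteq> \<sigma>} = {insert q \<tau>, insert r \<tau>}"
  proof (intro equalityI subsetI)
    fix \<rho> assume "\<rho> \<in> {\<rho> \<in> faces_of_dim \<Delta> (k - 1). \<tau> \<subseteq> \<rho> \<and> \<rho> \<subseteq> \<sigma>}"
    then have \<rho>: "\<tau> \<subseteq> \<rho>" "\<rho> \<subseteq> \<sigma>" "int (card \<rho>) = k"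
      by (auto simp: faces_of_dim_def fdim_def)
    then have "card (\<rho> - \<tau>) = 1"
      using card\<tau> fin\<sigma> by (simp add: card_Diff_subset fin\<tau> finite_subset)
    then obtain x where "\<rho> - \<tau> = {x}"
      by (auto simp: card_1_singleton_iff)
    then show "\<rho> \<in> {insert q \<tau>, insert r \<tau>}"
      using \<rho> \<sigma>_eq by auto
  next
    fix \<rho> assume "\<rho> \<in> {insert q \<tau>, insert r \<tau>}"
    moreover have "insert q \<tau> \<in> \<Delta>" "insert r \<tau> \<in> \<Delta>"
      using down_closed_subset_face[OF closed \<open>\<sigma> \<in> \<Delta>\<close>] \<sigma>_eq by auto
    ultimately show "\<rho> \<in> {\<rho> \<in> faces_of_dim \<Delta> (k - 1). \<tau> \<subseteq> \<rho> \<and> \<rho> \<subseteq> \<sigma>}"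
      using qr card\<tau> fin\<tau> \<sigma>_eq by (auto simp: faces_of_dim_def fdim_def)
  qed
  moreover have "insert q \<tau> \<noteq> insert r \<tau>"
    using qr by auto
  ultimately show ?thesis
    unfolding \<sigma>_eq by (simp add: incidence_insert_insert_cancel[OF fin\<tau> qr(2,3,1)])
qed

lemma boundary_map_boundary_map:
  assumes closed: "down_closed \<Delta>"
  shows "boundary_map \<Delta> (k - 1) (boundary_map \<Delta> k f) = (\<lambda>_. (0::'a::field))"
proof
  fix \<tau>
  show "boundary_map \<Delta> (k - 1) (boundary_map \<Delta> k f) \<tau> = 0"
  proof (cases "\<tau> \<in> faces_of_dim \<Delta> (k - 1 - 1)")
    case False
    then show ?thesis by (simp add: boundary_map_def)
  next
    case True
    define R where "R = {\<rho> \<in> faces_of_dim \<Delta> (k - 1). \<tau> \<subseteq> \<rho>}"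
    define S where "S = {\<sigma> \<in> faces_of_dim \<Delta> k. \<tau> \<subseteq> \<sigma>}"
    have fin: "finite R" "finite S"
      using finite_faces_of_dim[OF closed] by (auto simp: R_def S_def)
    have "boundary_map \<Delta> (k - 1) (boundary_map \<Delta> k f) \<tau>
        = (\<Sum>\<rho>\<in>R. incidence \<rho> \<tau> * (\<Sum>\<sigma>\<in>{\<sigma> \<in> faces_of_dim \<Delta> k. \<rho> \<subseteq> \<sigma>}. incidence \<sigma> \<rho> * f \<sigma>))"
      using True by (simp add: boundary_map_def R_def)
    also have "\<dots> = (\<Sum>\<rho>\<in>R. \<Sum>\<sigma>\<in>{\<sigma> \<in> S. \<rho> \<subseteq> \<sigma>}. incidence \<rho> \<tau> * incidence \<sigma> \<rho> * f \<sigma>)"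
    proof (rule sum.cong[OF refl])
      fix \<rho> assume "\<rho> \<in> R"
      then have "{\<sigma> \<in> faces_of_dim \<Delta> k. \<rho> \<subseteq> \<sigma>} = {\<sigma> \<in> S. \<rho> \<subseteq> \<sigma>}"
        by (auto simp: R_def S_def)
      then show "incidence \<rho> \<tau> * (\<Sum>\<sigma>\<in>{\<sigma> \<in> faces_of_dim \<Delta> k. \<rho> \<subseteq> \<sigma>}. incidence \<sigma> \<rho> * f \<sigma>)
          = (\<Sum>\<sigma>\<in>{\<sigma> \<in> S. \<rho> \<subseteq> \<sigma>}. incidence \<rho> \<tau> * incidence \<sigma> \<rho> * f \<sigma>)"
        by (simp add: sum_distrib_left mult.assoc)
    qed
    also have "\<dots> = (\<Sum>\<sigma>\<in>S. \<Sum>\<rho>\<in>{\<rho> \<in> R. \<rho> \<subseteq> \<sigma>}. incidence \<rho> \<tau> * incidence \<sigma> \<rho> * f \<sigma>)"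
      by (rule sum.swap_restrict[OF fin])
    also have "\<dots> = (\<Sum>\<sigma>\<in>S. (\<Sum>\<rho>\<in>{\<rho> \<in> faces_of_dim \<Delta> (k - 1). \<tau> \<subseteq> \<rho> \<and> \<rho> \<subseteq> \<sigma>}.
        incidence \<rho> \<tau> * incidence \<sigma> \<rho>) * f \<sigma>)"
      by (simp add: R_def sum_distrib_right conj_assoc)
    also have "\<dots> = 0"
      by (rule sum.neutral) (use sum_incidence_incidence_eq_0[OF closed _ True] in \<open>auto simp: S_def\<close>)
    finally show ?thesis .
  qed
qed

lemma boundaries_subset_cycles:
  assumes "down_closed \<Delta>"
  shows "boundaries A \<Delta> k \<subseteq> cycles A \<Delta> k"
proof
  fix z assume "z \<in> boundaries A \<Delta> k"
  then obtain g where "z = boundary_map \<Delta> (k + 1) g"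
    by (auto simp: boundaries_def)
  moreover have "boundary_map \<Delta> k (boundary_map \<Delta> (k + 1) g) = (\<lambda>_. 0)"
    using boundary_map_boundary_map[OF assms, of "k + 1" g] by simp
  ultimately show "z \<in> cycles A \<Delta> k"
    using boundary_map_in_chains by (auto simp: cycles_def)
qed

lemma red_hom_trivial_iff_cycles_subset:
  "down_closed \<Delta> \<Longrightarrow> red_hom_trivial A \<Delta> k \<longleftrightarrow> cycles A \<Delta> k \<subseteq> boundaries A \<Delta> k"
  using boundaries_subset_cycles by (auto simp: red_hom_trivial_def)

section \<open>Reduced zeroth homology and connectivity\<close>

lemma fdim_eq_iff_card:
  "fdim s = -1 \<longleftrightarrow> card s = 0" "fdim s = 0 \<longleftrightarrow> card s = 1" "fdim s = 1 \<longleftrightarrow> card s = 2"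
  by (auto simp: fdim_def)

definition vertex_chain :: "'v \<Rightarrow> 'v set \<Rightarrow> 'a::field" where
  "vertex_chain w s = (if s = {w} then 1 else 0)"

definition edge_chain :: "'v::linorder \<Rightarrow> 'v \<Rightarrow> 'v set \<Rightarrow> 'a::field" where
  "edge_chain w v s = (if s = {w, v} then incidence {w, v} {v} else 0)"

lemma incidence_edge:
  assumes "w \<noteq> v"
  shows "incidence {w, v} {v} = ((- 1) ^ (if v < w then 1 else 0) :: 'a::field)"
proof -
  have "{w, v} - {v} = {w}" "{x \<in> {v}. x < w} = (if v < w then {v} else {})"
    using assms by auto
  then show ?thesis by (simp add: incidence_def)
qed

lemma incidence_edge_swap:
  assumes "w \<noteq> v"
  shows "incidence {w, v} {w} = - (incidence {w, v} {v} :: 'a::field)"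
proof -
  have "incidence {w, v} {w} = (incidence {v, w} {w} :: 'a)"
    by (simp add: insert_commute)
  then show ?thesis
    using incidence_edge[OF assms, where 'a='a] incidence_edge[OF assms[symmetric], where 'a='a] assms
    by (cases "w < v") auto
qed

lemma incidence_square: "(incidence s t :: 'a::field) * incidence s t = 1"
  by (simp add: incidence_def flip: power_add)

lemma edge_chain_in_chains:
  "{w, v} \<in> \<Delta> \<Longrightarrow> w \<noteq> v \<Longrightarrow> edge_chain w v \<in> chains A \<Delta> 1"
  by (auto simp: edge_chain_def chains_def faces_of_dim_def fdim_eq_iff_card)

lemma boundary_map_edge_chain:
  assumes closed: "down_closed \<Delta>" and edge: "{w, v} \<in> \<Delta>" and "w \<noteq> v"
  shows "boundary_map \<Delta> 1 (edge_chain w v) = (\<lambda>s. vertex_chain v s - (vertex_chain w s :: 'a::field))"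
proof
  fix s
  have edge_dim: "{w, v} \<in> faces_of_dim \<Delta> 1"
    using edge \<open>w \<noteq> v\<close> by (simp add: faces_of_dim_def fdim_eq_iff_card)
  show "boundary_map \<Delta> 1 (edge_chain w v) s = vertex_chain v s - (vertex_chain w s :: 'a)"
  proof (cases "s \<in> faces_of_dim \<Delta> 0")
    case True
    then obtain x where s: "s = {x}"
      by (auto simp: faces_of_dim_def fdim_eq_iff_card card_1_singleton_iff)
    have "(\<Sum>\<sigma>\<in>{\<sigma> \<in> faces_of_dim \<Delta> 1. s \<subseteq> \<sigma>}. incidence \<sigma> s * edge_chain w v \<sigma>)
        = (\<Sum>\<sigma>\<in>{\<sigma> \<in> faces_of_dim \<Delta> 1. s \<subseteq> \<sigma>}.
             if {w, v} = \<sigma> then incidence {w, v} s * incidence {w, v} {v} else (0::'a))"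
      by (rule sum.cong) (auto simp: edge_chain_def)
    also have "\<dots> = (if s \<subseteq> {w, v} then incidence {w, v} s * incidence {w, v} {v} else 0)"
      using edge_dim finite_faces_of_dim[OF closed] by (simp add: sum.delta')
    also have "\<dots> = vertex_chain v s - vertex_chain w s"
      using incidence_square[of "{w, v}" "{v}", where 'a='a] incidence_edge_swap[OF \<open>w \<noteq> v\<close>, where 'a='a]
        \<open>w \<noteq> v\<close>
      by (auto simp: s vertex_chain_def)
    finally show ?thesis
      using True by (simp add: boundary_map_def)
  next
    case False
    have "{v} \<in> faces_of_dim \<Delta> 0" "{w} \<in> faces_of_dim \<Delta> 0"
      using down_closed_subset_face[OF closed edge] by (auto simp: faces_of_dim_def fdim_eq_iff_card)
    then show ?thesis
      using False by (auto simp: boundary_map_def vertex_chain_def)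
  qed
qed

lemma vertex_chain_diff_in_cycles:
  fixes A :: "'a::field itself" and \<Delta> :: "'v::linorder set set"
  assumes closed: "down_closed \<Delta>" and "{u} \<in> \<Delta>" "{v} \<in> \<Delta>"
  shows "(\<lambda>s. vertex_chain v s - vertex_chain u s) \<in> cycles A \<Delta> 0"
proof -
  have vertices: "{u} \<in> faces_of_dim \<Delta> 0" "{v} \<in> faces_of_dim \<Delta> 0"
    using assms by (auto simp: faces_of_dim_def fdim_eq_iff_card)
  have "boundary_map \<Delta> 0 (\<lambda>s. vertex_chain v s - (vertex_chain u s :: 'a)) \<tau> = 0" for \<tau> :: "'v set"
  proof (cases "\<tau> \<in> faces_of_dim \<Delta> (0 - 1)")
    case True
    then have "\<tau> = {}"
      by (auto simp: faces_of_dim_def fdim_eq_iff_card down_closed_finite_face[OF closed])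
    moreover have "incidence \<sigma> {} = (1::'a)" for \<sigma> :: "'v set"
      by (simp add: incidence_def)
    ultimately show ?thesis
      using True vertices finite_faces_of_dim[OF closed, of 0]
      by (simp add: boundary_map_def sum_subtractf vertex_chain_def sum.delta')
  qed (simp add: boundary_map_def)
  then show ?thesis
    using vertices by (auto simp: cycles_def chains_def vertex_chain_def)
qed

lemma rtranclp_adjacent_obtains_chain:
  assumes closed: "down_closed \<Delta>" and "(adjacent \<Delta>)\<^sup>*\<^sup>* u v"
  obtains c where "c \<in> chains A \<Delta> 1"
    "boundary_map \<Delta> 1 c = (\<lambda>s. vertex_chain v s - vertex_chain u s)"
  using assms(2) that
proof (induction arbitrary: thesis rule: rtranclp_induct)
  case base
  show ?case
    by (rule base[of "\<lambda>_. 0"]) (auto simp: chains_def boundary_map_zero)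
next
  case (step w v)
  obtain c where c: "c \<in> chains A \<Delta> 1"
    "boundary_map \<Delta> 1 c = (\<lambda>s. vertex_chain w s - vertex_chain u s)"
    using step.IH by blast
  show ?case
  proof (cases "w = v")
    case True
    then show ?thesis using c step.prems by blast
  next
    case False
    show ?thesis
    proof (rule step.prems)
      show "(\<lambda>s. c s + edge_chain w v s) \<in> chains A \<Delta> 1"
        using c(1) edge_chain_in_chains[OF step.hyps(2) False] by (simp add: chains_def)
      show "boundary_map \<Delta> 1 (\<lambda>s. c s + edge_chain w v s) = (\<lambda>s. vertex_chain v s - vertex_chain u s)"
        unfolding boundary_map_add c(2) boundary_map_edge_chain[OF closed step.hyps(2) False] by auto
    qed
  qed
qed

lemma sum_boundary_map_adjacency_closed:
  fixes c :: "'v::linorder set \<Rightarrow> 'a::field"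
  assumes closed: "down_closed \<Delta>" and S: "S \<subseteq> faces_of_dim \<Delta> 0"
    and S_closed: "\<And>p q. {p, q} \<in> \<Delta> \<Longrightarrow> {p} \<in> S \<longleftrightarrow> {q} \<in> S"
  shows "(\<Sum>\<tau>\<in>S. boundary_map \<Delta> 1 c \<tau>) = 0"
proof -
  have fin: "finite S" "finite (faces_of_dim \<Delta> 1)"
    using finite_faces_of_dim[OF closed] S finite_subset by blast+
  have "(\<Sum>\<tau>\<in>S. boundary_map \<Delta> 1 c \<tau>)
      = (\<Sum>\<tau>\<in>S. \<Sum>e\<in>{e \<in> faces_of_dim \<Delta> 1. \<tau> \<subseteq> e}. incidence e \<tau> * c e)"
    by (rule sum.cong) (use S in \<open>auto simp: boundary_map_def\<close>)
  also have "\<dots> = (\<Sum>e\<in>faces_of_dim \<Delta> 1. \<Sum>\<tau>\<in>{\<tau> \<in> S. \<tau> \<subseteq> e}. incidence e \<tau> * c e)"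
    by (rule sum.swap_restrict[OF fin])
  also have "\<dots> = 0"
  proof (rule sum.neutral, rule ballI)
    fix e assume "e \<in> faces_of_dim \<Delta> 1"
    then obtain p q where e: "e = {p, q}" "p \<noteq> q" "e \<in> \<Delta>"
      by (auto simp: faces_of_dim_def fdim_eq_iff_card card_2_iff)
    have "\<tau> = {p} \<or> \<tau> = {q}" if "\<tau> \<subseteq> {p, q}" "\<tau> \<in> S" for \<tau>
      using that S by (auto simp: faces_of_dim_def fdim_eq_iff_card card_1_singleton_iff)
    then have "{\<tau> \<in> S. \<tau> \<subseteq> e} = {{p}, {q}} \<or> {\<tau> \<in> S. \<tau> \<subseteq> e} = {}"
      using e S_closed[of p q] by auto
    then show "(\<Sum>\<tau>\<in>{\<tau> \<in> S. \<tau> \<subseteq> e}. incidence e \<tau> * c e) = 0"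
    proof (elim disjE)
      assume "{\<tau> \<in> S. \<tau> \<subseteq> e} = {{p}, {q}}"
      then show ?thesis
        using e(1,2) incidence_edge_swap[OF e(2), where 'a='a] by simp
    next
      assume none: "{\<tau> \<in> S. \<tau> \<subseteq> e} = {}"
      show ?thesis unfolding none by simp
    qed
  qed
  finally show ?thesis .
qed

lemma rtranclp_adjacent_of_boundary:
  fixes c :: "'v::linorder set \<Rightarrow> 'a::field"
  assumes closed: "down_closed \<Delta>"
    and boundary: "boundary_map \<Delta> 1 c = (\<lambda>s. vertex_chain v s - vertex_chain u s)"
    and u: "{u} \<in> \<Delta>"
  shows "(adjacent \<Delta>)\<^sup>*\<^sup>* u v"
proof (rule ccontr)
  assume not_reached: "\<not> (adjacent \<Delta>)\<^sup>*\<^sup>* u v"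
  define S where "S = {\<tau> \<in> faces_of_dim \<Delta> 0. \<exists>w. \<tau> = {w} \<and> (adjacent \<Delta>)\<^sup>*\<^sup>* u w}"
  have "(adjacent \<Delta>)\<^sup>*\<^sup>* u p \<longleftrightarrow> (adjacent \<Delta>)\<^sup>*\<^sup>* u q" if "{p, q} \<in> \<Delta>" for p q
  proof -
    have "adjacent \<Delta> p q" "adjacent \<Delta> q p"
      using that by (auto simp: insert_commute)
    then show ?thesis by (meson rtranclp.rtrancl_into_rtrancl)
  qed
  moreover have "{p} \<in> \<Delta>" "{q} \<in> \<Delta>" if "{p, q} \<in> \<Delta>" for p q
    using that down_closed_subset_face[OF closed] by blast+
  ultimately have zero: "(\<Sum>\<tau>\<in>S. boundary_map \<Delta> 1 c \<tau>) = 0"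
    by (intro sum_boundary_map_adjacency_closed[OF closed])
      (auto simp: S_def faces_of_dim_def fdim_eq_iff_card)
  have "finite S"
    using finite_faces_of_dim[OF closed, of 0] by (simp add: S_def)
  moreover have "{u} \<in> S" "{v} \<notin> S"
    using u not_reached by (auto simp: S_def faces_of_dim_def fdim_eq_iff_card)
  ultimately have "(\<Sum>\<tau>\<in>S. boundary_map \<Delta> 1 c \<tau>) = - 1"
    by (simp add: boundary sum_subtractf vertex_chain_def sum.delta')
  then show False
    using zero by simp
qed

lemma red_hom_trivial_0_rtranclp_adjacent:
  fixes A :: "'a::field itself" and \<Delta> :: "'v::linorder set set"
  assumes closed: "down_closed \<Delta>" and H0: "red_hom_trivial A \<Delta> 0"
    and "{u} \<in> \<Delta>" "{v} \<in> \<Delta>"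
  shows "(adjacent \<Delta>)\<^sup>*\<^sup>* u v"
proof -
  have "(\<lambda>s. vertex_chain v s - vertex_chain u s) \<in> cycles A \<Delta> 0"
    by (rule vertex_chain_diff_in_cycles[OF assms(1,3,4)])
  then have "(\<lambda>s. vertex_chain v s - vertex_chain u s) \<in> boundaries A \<Delta> 0"
    using H0 by (simp add: red_hom_trivial_def)
  then obtain c :: "'v set \<Rightarrow> 'a"
    where c: "(\<lambda>s. vertex_chain v s - vertex_chain u s) = boundary_map \<Delta> 1 c"
    by (auto simp: boundaries_def)
  show ?thesis
    by (rule rtranclp_adjacent_of_boundary[OF closed c[symmetric] \<open>{u} \<in> \<Delta>\<close>])
qed

lemma boundaries_0_no_edges:
  fixes A :: "'a::field itself" and L :: "'v::linorder set set"
  assumes "\<forall>s\<in>L. card s \<le> 1"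
  shows "boundaries A L 0 = {\<lambda>_. 0}"
proof -
  have no_edge_faces: "faces_of_dim L 1 = {}"
    using assms by (auto simp: faces_of_dim_def fdim_eq_iff_card)
  have "boundary_map L 1 g = (\<lambda>_. 0)" for g :: "'v set \<Rightarrow> 'a"
    unfolding boundary_map_def no_edge_faces by (rule ext) simp
  moreover have "(\<lambda>_. 0::'a) \<in> chains A L 1"
    by (simp add: chains_def)
  ultimately show ?thesis
    by (auto simp: boundaries_def)
qed

lemma sum_cycle_0_eq_0:
  assumes "{} \<in> L" and "z \<in> cycles A L 0"
  shows "(\<Sum>t\<in>faces_of_dim L 0. z t) = 0"
proof -
  have "{} \<in> faces_of_dim L (0 - 1)"
    using assms(1) by (simp add: faces_of_dim_def fdim_def)
  moreover have "boundary_map L 0 z {} = 0"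
    using assms(2) by (simp add: cycles_def)
  ultimately show ?thesis
    by (simp add: boundary_map_def incidence_def)
qed

text \<open>In a complex without edges only \<open>0\<close> is a boundary, so all 0-cycles are multiples of
  one cycle \<open>z\<close>; as the coefficients of a 0-cycle sum to zero, \<open>z\<close> is supported on at
  least two vertices \<open>a\<close>, \<open>b\<close>, and a third vertex \<open>w\<close> would make \<open>[a] - [w]\<close> and
  \<open>[a] - [b]\<close> independent.\<close>

lemma red_hom_is_field_0_two_vertices:
  fixes A :: "'a::field itself" and L :: "'v::linorder set set"
  assumes closed: "down_closed L" and no_edges: "\<forall>s\<in>L. card s \<le> 1"
    and H0: "red_hom_is_field A L 0"
  obtains a b where "a \<noteq> b" "vertices L = {a, b}"
proof -
  note no_boundaries = boundaries_0_no_edges[OF no_edges, of A]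
  obtain z where z: "z \<in> cycles A L 0" "z \<notin> boundaries A L 0"
    and cycles: "cycles A L 0 = {(\<lambda>x. c * z x + b x) | c b. b \<in> boundaries A L 0}"
    using H0 by (auto simp: red_hom_is_field_def)
  have multiple: "\<exists>c. \<forall>x. f x = c * z x" if "f \<in> cycles A L 0" for f
    using that cycles no_boundaries by auto
  have vertex_L: "{w} \<in> L \<longleftrightarrow> {w} \<in> faces_of_dim L 0" for w
    by (simp add: faces_of_dim_def fdim_eq_iff_card)
  obtain s where "z s \<noteq> 0"
    using z(2) no_boundaries by auto
  moreover have "z s = 0" if "s \<notin> faces_of_dim L 0"
    using z(1) that by (auto simp: cycles_def chains_def)
  ultimately obtain a where z_a: "z {a} \<noteq> 0" and a: "{a} \<in> faces_of_dim L 0"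
    by (auto simp: faces_of_dim_def fdim_eq_iff_card card_1_singleton_iff)
  have sum_zero: "(\<Sum>t\<in>faces_of_dim L 0. z t) = 0"
    using sum_cycle_0_eq_0[OF _ z(1)] a down_closed_subset_face[OF closed]
    by (auto simp: faces_of_dim_def)
  have "\<exists>t\<in>faces_of_dim L 0 - {{a}}. z t \<noteq> 0"
  proof (rule ccontr)
    assume "\<not> ?thesis"
    then have "(\<Sum>t\<in>faces_of_dim L 0 - {{a}}. z t) = 0"
      by (auto intro: sum.neutral)
    then have "(\<Sum>t\<in>faces_of_dim L 0. z t) = z {a}"
      using sum.remove[OF finite_faces_of_dim[OF closed] a, of z] by simp
    then show False
      using sum_zero z_a by simp
  qed
  then obtain b where b: "{b} \<in> faces_of_dim L 0" "a \<noteq> b"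
    by (auto simp: faces_of_dim_def fdim_eq_iff_card card_1_singleton_iff)
  have "w = a \<or> w = b" if w: "{w} \<in> L" for w
  proof (rule ccontr)
    assume other: "\<not> (w = a \<or> w = b)"
    obtain c1 where c1: "\<forall>x. vertex_chain a x - vertex_chain b x = c1 * z x"
      using multiple[OF vertex_chain_diff_in_cycles[OF closed, of b a]] a b(1) by (auto simp: vertex_L)
    obtain c2 where c2: "\<forall>x. vertex_chain a x - vertex_chain w x = c2 * z x"
      using multiple[OF vertex_chain_diff_in_cycles[OF closed, of w a]] a w by (auto simp: vertex_L)
    have "c1 * z {w} = 0" "c2 * z {w} = -1"
      using c1[rule_format, of "{w}"] c2[rule_format, of "{w}"] other by (auto simp: vertex_chain_def)
    then have "c1 = 0" by auto
    then show False
      using c1[rule_format, of "{a}"] b(2) by (auto simp: vertex_chain_def)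
  qed
  then have "vertices L = {a, b}"
    using a b by (auto simp: vertices_def vertex_L)
  then show ?thesis
    using that b(2) by blast
qed

section \<open>Deleting a vertex\<close>

lemma boundary_map_restrict_avoiding:
  "y \<in> e \<Longrightarrow> boundary_map K 2 (\<lambda>s. if y \<in> s then 0 else g s) e = 0"
  unfolding boundary_map_def by (auto intro!: sum.neutral)

lemma boundary_map_restrict_containing:
  assumes closed: "down_closed K" and "y \<notin> e" and not_link: "e \<notin> faces_of_dim (link K {y}) 1"
  shows "boundary_map K 2 (\<lambda>s. if y \<in> s then g s else 0) e = 0"
proof (cases "e \<in> faces_of_dim K 1")
  case True
  then have "insert y e \<notin> K"
    using \<open>y \<notin> e\<close> not_link by (auto simp: faces_of_dim_def link_singleton)
  then have "y \<notin> \<sigma>" if "\<sigma> \<in> K" "e \<subseteq> \<sigma>" for \<sigma>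
    using that down_closed_subset_face[OF closed, of \<sigma> "insert y e"] by blast
  then show ?thesis
    unfolding boundary_map_def by (auto simp: faces_of_dim_def intro!: sum.neutral)
qed (simp add: boundary_map_def)

text \<open>Chain-level Mayer--Vietoris for \<open>K = (K - y) \<union> star y\<close>, whose parts meet in \<open>lk y\<close>:
  split a 2-chain bounding \<open>p + q\<close> into its parts avoiding and containing \<open>y\<close>; away from \<open>y\<close>
  the boundary of the second part lives on \<open>lk y\<close>.\<close>

lemma homologous_to_link_chain:
  fixes p q :: "'v::linorder set \<Rightarrow> 'a::field"
  assumes closed: "down_closed K" and H1: "red_hom_trivial A K 1"
    and p: "p \<in> chains A (induced K (- {y})) 1"
    and q: "q \<in> chains A K 1" and q_star: "\<And>e. y \<notin> e \<Longrightarrow> q e = 0"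
    and cycle: "boundary_map K 1 (\<lambda>e. p e + q e) = (\<lambda>_. 0)"
  obtains r g where "r \<in> chains A (link K {y}) 1" "g \<in> chains A (induced K (- {y})) 2"
    and "p = (\<lambda>e. r e + boundary_map K 2 g e)"
proof -
  have "p \<in> chains A K 1"
    using p chains_mono[OF induced_subset] by blast
  then have "(\<lambda>e. p e + q e) \<in> cycles A K 1"
    using q cycle by (simp add: cycles_def chains_def)
  then obtain G where G: "G \<in> chains A K 2" "(\<lambda>e. p e + q e) = boundary_map K 2 G"
    using H1 by (auto simp: red_hom_trivial_def boundaries_def)
  define g where "g = (\<lambda>s. if y \<in> s then 0 else G s)"
  define r where "r = (\<lambda>e. p e - boundary_map K 2 g e)"
  have g: "g \<in> chains A (induced K (- {y})) 2"
    using G(1) by (auto simp: g_def chains_def faces_of_dim_def induced_def)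
  have split: "boundary_map K 2 G
      = (\<lambda>e. boundary_map K 2 g e + boundary_map K 2 (\<lambda>s. if y \<in> s then G s else 0) e)"
  proof -
    have "G = (\<lambda>s. g s + (if y \<in> s then G s else 0))"
      by (auto simp: g_def)
    then show ?thesis
      by (metis boundary_map_add)
  qed
  have "r e = 0" if e: "e \<notin> faces_of_dim (link K {y}) 1" for e
  proof (cases "y \<in> e")
    case True
    then have "p e = 0"
      using p by (auto simp: chains_def faces_of_dim_def induced_def)
    then show ?thesis
      using boundary_map_restrict_avoiding[OF True] by (simp add: r_def g_def)
  next
    case False
    then have "p e = boundary_map K 2 G e"
      using fun_cong[OF G(2), of e] q_star by simp
    then show ?thesis
      using boundary_map_restrict_containing[OF closed False e] by (simp add: r_def split)
  qed
  then have "r \<in> chains A (link K {y}) 1"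
    by (simp add: chains_def)
  moreover have "p = (\<lambda>e. r e + boundary_map K 2 g e)"
    by (simp add: r_def)
  ultimately show ?thesis
    using that g by blast
qed

lemma red_hom_trivial_1_induced_delete:
  fixes A :: "'a::field itself" and K :: "'v::linorder set set"
  assumes closed: "down_closed K" and H1: "red_hom_trivial A K 1"
    and H1_link: "red_hom_trivial A (link K {y}) 1"
  shows "red_hom_trivial A (induced K (- {y})) 1"
proof -
  let ?D = "induced K (- {y})" and ?L = "link K {y}"
  have D: "down_closed ?D" and L: "down_closed ?L"
    using down_closed_induced[OF closed] down_closed_link[OF closed] .
  have fin: "finite K" "finite ?D"
    using down_closed_finite D closed by blast+
  have L_sub: "?L \<subseteq> K" "?L \<subseteq> ?D"
    using link_subset_induced_delete[OF closed] induced_subset by blast+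
  have "cycles A ?D 1 \<subseteq> boundaries A ?D 1"
  proof
    fix z assume "z \<in> cycles A ?D 1"
    then have z: "z \<in> chains A ?D 1" "boundary_map ?D 1 z = (\<lambda>_. 0)"
      by (auto simp: cycles_def)
    have cycle: "boundary_map K 1 (\<lambda>e. z e + 0) = (\<lambda>_. 0)"
      using boundary_map_subcomplex[OF fin(1) induced_subset D z(1)] z(2) by simp
    obtain r g where r: "r \<in> chains A ?L 1" and g: "g \<in> chains A ?D 2"
      and z_eq: "z = (\<lambda>e. r e + boundary_map K 2 g e)"
      by (rule homologous_to_link_chain[OF closed H1 z(1) _ _ cycle]) (auto simp: chains_def)
    have "boundary_map ?L 1 r = boundary_map K 1 (\<lambda>e. z e - boundary_map K 2 g e)"
      using boundary_map_subcomplex[OF fin(1) L_sub(1) L r] z_eq by simp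
    also have "\<dots> = (\<lambda>_. 0)"
      unfolding boundary_map_diff
      using boundary_map_subcomplex[OF fin(1) induced_subset D z(1)] z(2)
        boundary_map_boundary_map[OF closed, of 2 g]
      by simp
    finally have "r \<in> cycles A ?L 1"
      using r by (simp add: cycles_def)
    then obtain h where h: "h \<in> chains A ?L 2" "r = boundary_map ?L 2 h"
      using H1_link by (auto simp: red_hom_trivial_def boundaries_def)
    have "z = boundary_map ?D 2 (\<lambda>s. h s + g s)"
      unfolding boundary_map_add z_eq h(2)
        boundary_map_subcomplex[OF fin(2) L_sub(2) L h(1)]
        boundary_map_subcomplex[OF fin(1) induced_subset D g] ..
    moreover have "(\<lambda>s. h s + g s) \<in> chains A ?D 2"
      using h(1) chains_mono[OF L_sub(2)] g by (auto simp: chains_def)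
    ultimately show "z \<in> boundaries A ?D 1"
      by (auto simp: boundaries_def)
  qed
  then show ?thesis
    using red_hom_trivial_iff_cycles_subset[OF D] by blast
qed

lemma rtranclp_adjacent_link_of_induced_delete:
  fixes A :: "'a::field itself" and K :: "'v::linorder set set"
  assumes closed: "down_closed K" and H1: "red_hom_trivial A K 1"
    and "{u, y} \<in> K" "u \<noteq> y" and "{v, y} \<in> K" "v \<noteq> y"
    and path: "(adjacent (induced K (- {y})))\<^sup>*\<^sup>* u v"
  shows "(adjacent (link K {y}))\<^sup>*\<^sup>* u v"
proof -
  let ?D = "induced K (- {y})" and ?L = "link K {y}"
  have D: "down_closed ?D" and L: "down_closed ?L"
    using down_closed_induced[OF closed] down_closed_link[OF closed] .
  have fin: "finite K"
    using down_closed_finite closed by blast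
  obtain p where p: "p \<in> chains A ?D 1"
    and boundary_p: "boundary_map ?D 1 p = (\<lambda>s. vertex_chain v s - vertex_chain u s)"
    using rtranclp_adjacent_obtains_chain[OF D path] by blast
  have p_K: "boundary_map K 1 p = boundary_map ?D 1 p"
    by (rule boundary_map_subcomplex[OF fin induced_subset D p])
  have "{y, u} \<in> K"
    using \<open>{u, y} \<in> K\<close> by (simp add: insert_commute)
  define q where "q = (\<lambda>s. edge_chain v y s + edge_chain y u s :: 'a)"
  have "edge_chain v y \<in> chains A K 1" "edge_chain y u \<in> chains A K 1"
    using edge_chain_in_chains \<open>{v, y} \<in> K\<close> \<open>v \<noteq> y\<close> \<open>{y, u} \<in> K\<close> \<open>u \<noteq> y\<close> by metis+
  then have "q \<in> chains A K 1"
    by (simp add: q_def chains_def)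
  moreover have "q e = 0" if "y \<notin> e" for e
    using that by (auto simp: q_def edge_chain_def)
  moreover have "boundary_map K 1 (\<lambda>e. p e + q e) = (\<lambda>_. 0)"
    unfolding q_def boundary_map_add p_K boundary_p
      boundary_map_edge_chain[OF closed \<open>{v, y} \<in> K\<close> \<open>v \<noteq> y\<close>]
      boundary_map_edge_chain[OF closed \<open>{y, u} \<in> K\<close> \<open>u \<noteq> y\<close>[symmetric]]
    by auto
  ultimately obtain r g where r: "r \<in> chains A ?L 1" and p_eq: "p = (\<lambda>e. r e + boundary_map K 2 g e)"
    using homologous_to_link_chain[OF closed H1 p] by blast
  have "?L \<subseteq> K"
    using link_subset_induced_delete[OF closed] induced_subset by blast
  then have "boundary_map ?L 1 r = boundary_map K 1 (\<lambda>e. p e - boundary_map K 2 g e)"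
    using boundary_map_subcomplex[OF fin _ L r] p_eq by simp
  also have "\<dots> = (\<lambda>s. vertex_chain v s - vertex_chain u s)"
    unfolding boundary_map_diff p_K boundary_p
    using boundary_map_boundary_map[OF closed, of 2 g] by simp
  finally show ?thesis
    using rtranclp_adjacent_of_boundary[OF L] \<open>{y, u} \<in> K\<close> \<open>u \<noteq> y\<close>
    by (auto simp: link_singleton)
qed

section \<open>Links of the faces of a ridge\<close>

lemma mem_induced_link_iff:
  "\<tau> \<in> induced (link B \<rho>) W \<longleftrightarrow> \<tau> \<inter> \<rho> = {} \<and> \<tau> \<union> \<rho> \<in> B \<and> \<tau> \<subseteq> W"
  by (auto simp: induced_def link_eq)

lemma red_hom_trivial_1_induced_link:
  fixes F :: "'a::field itself" and B :: "'v::linorder set set"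
  assumes B: "simplicial_complex B" and "\<sigma> \<in> B"
    and H1: "\<And>\<rho>. \<rho> \<subset> \<sigma> \<Longrightarrow> red_hom_trivial F (link B \<rho>) 1"
    and "\<rho> \<inter> U = {}" "\<rho> \<union> U \<subset> \<sigma>"
  shows "red_hom_trivial F (induced (link B \<rho>) (- U)) 1"
proof -
  have "finite U"
    using assms(2,5) B finite_subset by (auto simp: simplicial_complex_def)
  then show ?thesis
    using assms(4,5)
  proof (induction U arbitrary: \<rho> rule: finite_induct)
    case empty
    then show ?case
      using H1 by simp
  next
    case (insert y U)
    let ?K = "induced (link B \<rho>) (- U)"
    have closed: "down_closed ?K"
      using down_closed_induced down_closed_link simplicial_complex_down_closed[OF B] by blast
    have link_K: "link ?K {y} = induced (link B (insert y \<rho>)) (- U)"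
      using insert.hyps(2) insert.prems(1) by (simp add: link_induced link_link)
    have "red_hom_trivial F (induced ?K (- {y})) 1"
    proof (rule red_hom_trivial_1_induced_delete[OF closed])
      show "red_hom_trivial F ?K 1"
        using insert.IH[of \<rho>] insert.prems by auto
      show "red_hom_trivial F (link ?K {y}) 1"
        unfolding link_K using insert.IH[of "insert y \<rho>"] insert.hyps(2) insert.prems by auto
    qed
    moreover have "- U \<inter> - {y} = - insert y U"
      by auto
    ultimately show ?case
      by (simp add: induced_induced)
  qed
qed

lemma rtranclp_adjacent_induced_link_descend:
  fixes F :: "'a::field itself" and B :: "'v::linorder set set"
  assumes B: "simplicial_complex B" and H1: "red_hom_trivial F (induced (link B \<rho>) (- U)) 1"
    and "x \<notin> \<rho>" "x \<notin> U"
    and "{a, x} \<in> induced (link B \<rho>) (- U)" "a \<noteq> x"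
    and "{b, x} \<in> induced (link B \<rho>) (- U)" "b \<noteq> x"
    and path: "(adjacent (induced (link B \<rho>) (- insert x U)))\<^sup>*\<^sup>* a b"
  shows "(adjacent (induced (link B (insert x \<rho>)) (- U)))\<^sup>*\<^sup>* a b"
proof -
  let ?K = "induced (link B \<rho>) (- U)"
  have closed: "down_closed ?K"
    using down_closed_induced down_closed_link simplicial_complex_down_closed[OF B] by blast
  have "- U \<inter> - {x} = - insert x U"
    by auto
  then have "(adjacent (induced ?K (- {x})))\<^sup>*\<^sup>* a b"
    using path by (simp add: induced_induced)
  then have "(adjacent (link ?K {x}))\<^sup>*\<^sup>* a b"
    by (rule rtranclp_adjacent_link_of_induced_delete[OF closed H1 assms(5-8)])
  moreover have "link ?K {x} = induced (link B (insert x \<rho>)) (- U)"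
    using assms(3,4) by (simp add: link_induced link_link)
  ultimately show ?thesis
    by simp
qed

lemma not_rtranclp_adjacent_induced_link:
  fixes F :: "'a::field itself" and B :: "'v::linorder set set"
  assumes B: "simplicial_complex B" and \<sigma>: "\<sigma> \<in> B"
    and H1: "\<And>\<rho>. \<rho> \<subset> \<sigma> \<Longrightarrow> red_hom_trivial F (link B \<rho>) 1"
    and no_edges: "\<forall>\<tau>\<in>link B \<sigma>. card \<tau> \<le> 1"
    and a: "{a} \<in> link B \<sigma>" and b: "{b} \<in> link B \<sigma>" and "a \<noteq> b"
    and "\<rho> \<inter> U = {}" "\<rho> \<union> U = \<sigma>"
  shows "\<not> (adjacent (induced (link B \<rho>) (- U)))\<^sup>*\<^sup>* a b"
proof -
  have "finite U"
    using assms(2,9) B finite_subset by (auto simp: simplicial_complex_def)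
  have "a \<notin> \<sigma>" "insert a \<sigma> \<in> B" "b \<notin> \<sigma>" "insert b \<sigma> \<in> B"
    using a b by (auto simp: link_eq)
  show ?thesis
    using \<open>finite U\<close> assms(8,9)
  proof (induction U arbitrary: \<rho> rule: finite_induct)
    case empty
    have loop: "x = y" if "adjacent (link B \<sigma>) x y" for x y
      using that no_edges by (cases "x = y") auto
    have "a = b" if "(adjacent (link B \<sigma>))\<^sup>*\<^sup>* a b"
      using that by (induction rule: rtranclp_induct) (auto dest: loop)
    then show ?case
      using empty \<open>a \<noteq> b\<close> by auto
  next
    case (insert x U)
    let ?K = "induced (link B \<rho>) (- U)"
    have x: "x \<in> \<sigma>" "x \<notin> \<rho>" "a \<noteq> x" "b \<noteq> x"
      using insert.prems \<open>a \<notin> \<sigma>\<close> \<open>b \<notin> \<sigma>\<close> by auto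
    have H1_K: "red_hom_trivial F ?K 1"
      by (rule red_hom_trivial_1_induced_link[OF B \<sigma> H1]) (use insert x in auto)
    have "{a, x} \<union> \<rho> \<subseteq> insert a \<sigma>" "{b, x} \<union> \<rho> \<subseteq> insert b \<sigma>"
      using insert.prems by auto
    then have ax: "{a, x} \<in> ?K" and bx: "{b, x} \<in> ?K"
      using simplicial_complex_down_closed[OF B] \<open>insert a \<sigma> \<in> B\<close> \<open>insert b \<sigma> \<in> B\<close>
        \<open>a \<notin> \<sigma>\<close> \<open>b \<notin> \<sigma>\<close> x insert.hyps(2) insert.prems
      by (auto simp: mem_induced_link_iff intro: down_closed_subset_face)
    show ?case
    proof
      assume "(adjacent (induced (link B \<rho>) (- insert x U)))\<^sup>*\<^sup>* a b"
      then have "(adjacent (induced (link B (insert x \<rho>)) (- U)))\<^sup>*\<^sup>* a b"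
        by (rule rtranclp_adjacent_induced_link_descend[OF B H1_K x(2) insert.hyps(2) ax x(3) bx x(4)])
      then show False
        using insert.IH[of "insert x \<rho>"] insert.hyps(2) insert.prems by auto
    qed
  qed
qed

lemma rtranclp_adjacent_exit:
  assumes closed: "down_closed \<Delta>" and path: "(adjacent \<Delta>)\<^sup>*\<^sup>* w x"
    and "x \<in> S" "{w} \<in> \<Delta>" "w \<notin> S"
  shows "\<exists>u y. (adjacent (induced \<Delta> (- S)))\<^sup>*\<^sup>* w u \<and> {u, y} \<in> \<Delta> \<and> u \<notin> S \<and> y \<in> S"
  using path assms(4,5)
proof (induction rule: converse_rtranclp_induct)
  case base
  then show ?case
    using \<open>x \<in> S\<close> by simp
next
  case (step w w')
  show ?case
  proof (cases "w' \<in> S")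
    case True
    then show ?thesis
      using step.hyps(1) step.prems(2) by blast
  next
    case False
    have "{w'} \<in> \<Delta>"
      using down_closed_subset_face[OF closed step.hyps(1)] by blast
    then obtain u y where "(adjacent (induced \<Delta> (- S)))\<^sup>*\<^sup>* w' u" "{u, y} \<in> \<Delta>" "u \<notin> S" "y \<in> S"
      using step.IH False by blast
    moreover have "adjacent (induced \<Delta> (- S)) w w'"
      using step.hyps(1) step.prems(2) False by (simp add: induced_def)
    ultimately show ?thesis
      by (blast intro: converse_rtranclp_into_rtranclp)
  qed
qed

text \<open>Induction on \<open>|\<sigma> - \<rho>|\<close>: a path in the connected link of \<open>\<rho>\<close> from \<open>w\<close> to a vertex of
  \<open>\<sigma> - \<rho>\<close> leaves \<open>lk \<rho> - \<sigma>\<close> along an edge \<open>u y\<close> with \<open>y \<in> \<sigma>\<close>, and \<open>u\<close> is a vertex of the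
  link of \<open>\<rho> \<union> {y}\<close>.\<close>

lemma rtranclp_adjacent_induced_link_to_link:
  fixes F :: "'a::field itself" and B :: "'v::linorder set set"
  assumes B: "simplicial_complex B" and \<sigma>: "\<sigma> \<in> B"
    and H0: "\<And>\<rho>. \<rho> \<subset> \<sigma> \<Longrightarrow> red_hom_trivial F (link B \<rho>) 0"
    and "\<rho> \<subseteq> \<sigma>" and "{w} \<in> induced (link B \<rho>) (- \<sigma>)"
  shows "\<exists>c\<in>vertices (link B \<sigma>). (adjacent (induced (link B \<rho>) (- \<sigma>)))\<^sup>*\<^sup>* w c"
  using assms(4,5)
proof (induction "card (\<sigma> - \<rho>)" arbitrary: \<rho> w rule: less_induct)
  case less
  have closed: "down_closed B"
    using simplicial_complex_down_closed[OF B] .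
  let ?K = "induced (link B \<rho>) (- \<sigma>)"
  show ?case
  proof (cases "\<rho> = \<sigma>")
    case True
    then show ?thesis
      using less.prems by (auto simp: vertices_def induced_def)
  next
    case False
    then obtain x where x: "x \<in> \<sigma>" "x \<notin> \<rho>"
      using less.prems(1) by blast
    have "{x} \<in> link B \<rho>"
      using x less.prems(1) down_closed_subset_face[OF closed \<sigma>, of "{x} \<union> \<rho>"] by (auto simp: link_eq)
    moreover have w: "{w} \<in> link B \<rho>" "w \<notin> \<sigma>"
      using less.prems(2) by (auto simp: induced_def)
    moreover have "red_hom_trivial F (link B \<rho>) 0"
      using H0 False less.prems(1) by blast
    ultimately have "(adjacent (link B \<rho>))\<^sup>*\<^sup>* w x"
      using red_hom_trivial_0_rtranclp_adjacent[OF down_closed_link[OF closed]] by blast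
    then obtain u y where path: "(adjacent ?K)\<^sup>*\<^sup>* w u"
      and "{u, y} \<in> link B \<rho>" "u \<notin> \<sigma>" "y \<in> \<sigma>"
      using rtranclp_adjacent_exit[OF down_closed_link[OF closed] _ x(1) w] by auto
    from \<open>{u, y} \<in> link B \<rho>\<close> have edge: "{u, y} \<inter> \<rho> = {}" "{u, y} \<union> \<rho> \<in> B"
      by (simp_all add: link_eq)
    let ?\<rho>' = "insert y \<rho>"
    have "card (\<sigma> - ?\<rho>') < card (\<sigma> - \<rho>)"
      using \<open>y \<in> \<sigma>\<close> edge(1) \<sigma> B by (intro psubset_card_mono) (auto simp: simplicial_complex_def)
    moreover have "{u} \<in> induced (link B ?\<rho>') (- \<sigma>)"
    proof -
      have "{u} \<union> ?\<rho>' = {u, y} \<union> \<rho>"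
        by auto
      then show ?thesis
        using edge \<open>u \<notin> \<sigma>\<close> \<open>y \<in> \<sigma>\<close> less.prems(1) by (auto simp: mem_induced_link_iff)
    qed
    ultimately obtain c where "c \<in> vertices (link B \<sigma>)"
      and "(adjacent (induced (link B ?\<rho>') (- \<sigma>)))\<^sup>*\<^sup>* u c"
      using less.hyps[of ?\<rho>'] \<open>y \<in> \<sigma>\<close> less.prems(1) by blast
    moreover have "adjacent (induced (link B ?\<rho>') (- \<sigma>)) \<le> adjacent ?K"
      using link_antimono[OF closed, of \<rho> ?\<rho>'] by (auto simp: induced_def)
    ultimately have "c \<in> vertices (link B \<sigma>)" "(adjacent ?K)\<^sup>*\<^sup>* u c"
      using rtranclp_mono by blast+
    then show ?thesis
      using path by (blast intro: rtranclp_trans)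
  qed
qed

lemma num_components_eq_2:
  assumes "a \<in> vertices \<Delta>" "b \<in> vertices \<Delta>" and apart: "\<not> (adjacent \<Delta>)\<^sup>*\<^sup>* a b"
    and reach: "\<And>w. w \<in> vertices \<Delta> \<Longrightarrow> (adjacent \<Delta>)\<^sup>*\<^sup>* w a \<or> (adjacent \<Delta>)\<^sup>*\<^sup>* w b"
  shows "num_components \<Delta> = 2"
proof -
  let ?R = "(adjacent \<Delta>)\<^sup>*\<^sup>*"
  have sym: "symp ?R"
    by (rule symp_rtranclp) (auto simp: symp_def insert_commute)
  define component where "component x = {v \<in> vertices \<Delta>. ?R x v}" for x
  have quotient: "vertices \<Delta> // connected_rel \<Delta> = component ` vertices \<Delta>"
    by (auto simp: quotient_def connected_rel_def component_def)
  have same: "component w = component c" if "?R w c" for w c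
    using that sympD[OF sym that] by (auto simp: component_def intro: rtranclp_trans)
  have "component ` vertices \<Delta> = {component a, component b}"
    using reach same assms(1,2) by auto
  moreover have "b \<in> component b" "b \<notin> component a"
    using assms(2) apart by (auto simp: component_def)
  ultimately show ?thesis
    unfolding num_components_def quotient by (metis card_2_iff)
qed

lemma homology_ball_boundary_link_acyclic:
  assumes ball: "homology_ball F B d" and \<rho>: "\<rho> \<in> ball_boundary F B d"
  shows "acyclic_cx F (link B \<rho>)"
proof (cases "\<rho> = {}")
  case True
  then show ?thesis
    using ball by (simp add: homology_ball_def)
next
  case False
  then have "\<rho> \<in> B" "fdim \<rho> \<le> d - 1"
    and trivial: "red_hom_trivial F (link B \<rho>) (d - fdim \<rho> - 1)"
    using \<rho> by (auto simp: ball_boundary_def)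
  then have "acyclic_cx F (link B \<rho>) \<or> sphere_homology F (link B \<rho>) (d - fdim \<rho> - 1)"
    using ball by (simp add: homology_ball_def)
  moreover have "\<not> sphere_homology F (link B \<rho>) (d - fdim \<rho> - 1)"
    using trivial by (auto simp: sphere_homology_def red_hom_is_field_def red_hom_trivial_def)
  ultimately show ?thesis
    by blast
qed

lemma homology_ball_interior_ridge_link:
  assumes ball: "homology_ball F B d" and \<sigma>: "\<sigma> \<in> B" "fdim \<sigma> = d - 1"
    and interior: "\<sigma> \<notin> ball_boundary F B d"
  shows "sphere_homology F (link B \<sigma>) 0"
proof -
  have "finite \<sigma>"
    using ball \<sigma>(1) by (simp add: homology_ball_def simplicial_complex_def)
  moreover have "\<sigma> \<noteq> {}"
    using interior by (auto simp: ball_boundary_def)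
  ultimately have "-1 < fdim \<sigma>"
    by (simp add: fdim_def card_gt_0_iff)
  then have "\<not> acyclic_cx F (link B \<sigma>)"
    using \<sigma> interior by (auto simp: ball_boundary_def acyclic_cx_def)
  then show ?thesis
    using ball \<sigma> by (auto simp: homology_ball_def)
qed

lemma link_ridge_card_le_1:
  assumes B: "simplicial_complex B" and dim: "\<forall>s\<in>B. fdim s \<le> d"
    and "fdim \<sigma> = d - 1" and \<tau>: "\<tau> \<in> link B \<sigma>"
  shows "card \<tau> \<le> 1"
proof -
  have "\<tau> \<inter> \<sigma> = {}" "\<tau> \<union> \<sigma> \<in> B"
    using \<tau> by (auto simp: link_eq)
  moreover have "finite (\<tau> \<union> \<sigma>)"
    using B \<open>\<tau> \<union> \<sigma> \<in> B\<close> by (simp add: simplicial_complex_def)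
  ultimately have "card (\<tau> \<union> \<sigma>) = card \<tau> + card \<sigma>" "fdim (\<tau> \<union> \<sigma>) \<le> d"
    using dim by (auto simp: card_Un_disjoint)
  then show ?thesis
    using \<open>fdim \<sigma> = d - 1\<close> by (simp add: fdim_def)
qed

theorem lemma3p3:
  fixes F :: "'a::field itself"
    and B :: "'v::linorder set set"
    and d :: int
    and \<sigma> :: "'v set"
  assumes "homology_ball F B d"
    and "\<sigma> \<in> B" and "fdim \<sigma> = d - 1"
    and "\<sigma> \<notin> ball_boundary F B d"
    and "{\<tau>. \<tau> \<subset> \<sigma>} \<subseteq> ball_boundary F B d"
  shows "num_components (induced B (vertices B - \<sigma>)) = 2"
proof -
  have B: "simplicial_complex B" and dim: "\<forall>s\<in>B. fdim s \<le> d"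
    using assms(1) by (auto simp: homology_ball_def has_dim_def)
  have acyclic: "\<And>\<rho>. \<rho> \<subset> \<sigma> \<Longrightarrow> acyclic_cx F (link B \<rho>)"
    using homology_ball_boundary_link_acyclic[OF assms(1)] assms(5) by blast
  have no_edges: "\<forall>\<tau>\<in>link B \<sigma>. card \<tau> \<le> 1"
    using link_ridge_card_le_1[OF B dim assms(3)] by blast
  obtain a b where "a \<noteq> b" and link_vertices: "vertices (link B \<sigma>) = {a, b}"
    using red_hom_is_field_0_two_vertices[OF down_closed_link[OF simplicial_complex_down_closed[OF B]] no_edges]
      homology_ball_interior_ridge_link[OF assms(1-4)] by (auto simp: sphere_homology_def)
  then have ab: "{a} \<in> link B \<sigma>" "{b} \<in> link B \<sigma>"
    unfolding vertices_def by blast+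
  have "\<not> (adjacent (induced B (- \<sigma>)))\<^sup>*\<^sup>* a b"
    using not_rtranclp_adjacent_induced_link[OF B assms(2) _ no_edges ab \<open>a \<noteq> b\<close>, where \<rho>="{}" and U=\<sigma>]
      acyclic by (auto simp: acyclic_cx_def)
  moreover have "(adjacent (induced B (- \<sigma>)))\<^sup>*\<^sup>* w a \<or> (adjacent (induced B (- \<sigma>)))\<^sup>*\<^sup>* w b"
    if "w \<in> vertices (induced B (- \<sigma>))" for w
    using rtranclp_adjacent_induced_link_to_link[OF B assms(2), where F=F and \<rho>="{}" and w=w]
      acyclic that link_vertices
    by (auto simp: acyclic_cx_def vertices_def[of "induced B (- \<sigma>)"])
  moreover have "a \<in> vertices (induced B (- \<sigma>))" "b \<in> vertices (induced B (- \<sigma>))"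
    using ab down_closed_subset_face[OF simplicial_complex_down_closed[OF B]]
    by (auto simp: vertices_def induced_def link_eq)
  ultimately show ?thesis
    unfolding induced_vertices_diff[OF B] by (rule num_components_eq_2[rotated 2])
qed

end
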